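(* For $0\le r_1,r_2\le n$ and $0\le s\le\min(r_1,n-r_1,r_2,n-r_2)$, $$\mathrm{tr}\big(\Lambda_s^{r_1,r_2}\circ(\Lambda_s^{r_1,r_2})^\star\big)=\frac{[r_1]_s\,[n-r_2]_s}{[n-r_1]_s\,[r_2]_s}\cdot\frac{\binom{n}{r_1}\binom{n}{r_2}}{\binom{n}{s}-\binom{n}{s-1}}.$$
   Context: Let $\Omega$ be a finite set with $|\Omega|=n\ge1$, $G=S(\Omega)$, $X=\mathcal P(\Omega)$, $X_r=\{x\in X:|x|=r\}$, $G$ acting on $L^2(X)$ (complex functions on $X$ with standard inner product; $L^2(X_r)$ = functions supported on $X_r$) by $(\rho(g)\psi)(x)=\psi(g^{-1}x)$. For $0\le s\le\min(r,n-r)$, $L^2(X_r)_s$ is the unique irreducible $G$-subspace of $L^2(X_r)$ isomorphic to the irreducible representation associated with the partition $(n-s,s)$. For $0\le s\le\min(r_1,n-r_1,r_2,n-r_2)$, $\Lambda_s^{r_1,r_2}$ is a $G$-equivariant map $L^2(X)\to L^2(X)$ sending $L^2(X_{r_1})_s$ into $L^2(X_{r_2})_s$ and vanishing on its orthogonal complement, with kernel $\lambda$ defined on integers $\max(0,r_2-r_1)\le k\le\min(n-r_1,r_2)$ by $(\Lambda_s^{r_1,r_2}\psi)(x_2)=\sum_{x_1\in X_{r_1}}\lambda(|x_2\setminus x_1|)\psi(x_1)$. The kernel agrees on its domain with a unique polynomial of degree $s$ which is nonzero at $0$; $\Lambda_s^{r_1,r_2}$ is normalized so that this polynomial takes the value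 $1$ at $t=0$. $\star$ is the Hilbert adjoint, $[\alpha]_k=\alpha(\alpha-1)\cdots(\alpha-k+1)$, $\binom{n}{-1}=0$. *)

theory Defs
  imports Complex_Main "HOL-Computational_Algebra.Polynomial"
begin

text \<open>Omega is the finite type 'a, n = CARD('a); X = Pow Omega = UNIV :: 'a set set.
  L2(X) is the space of all functions 'a set => complex.\<close>

definition l2_inner :: "('a::finite set \<Rightarrow> complex) \<Rightarrow> ('a set \<Rightarrow> complex) \<Rightarrow> complex" where
  "l2_inner f g = (\<Sum>x\<in>UNIV. f x * cnj (g x))"

definition delta :: "'a set \<Rightarrow> 'a set \<Rightarrow> complex" where
  "delta x = (\<lambda>y. if y = x then 1 else 0)"

definition op_trace :: "(('a::finite set \<Rightarrow> complex) \<Rightarrow> ('a set \<Rightarrow> complex)) \<Rightarrow> complex" where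
  "op_trace T = (\<Sum>x\<in>UNIV. T (delta x) x)"

text \<open>Hilbert adjoint of a linear operator on L2(X) (conjugate transpose of its matrix
  in the orthonormal basis of deltas).\<close>
definition hadjoint :: "(('a::finite set \<Rightarrow> complex) \<Rightarrow> ('a set \<Rightarrow> complex))
    \<Rightarrow> ('a set \<Rightarrow> complex) \<Rightarrow> ('a set \<Rightarrow> complex)" where
  "hadjoint T = (\<lambda>\<psi> x. \<Sum>y\<in>UNIV. cnj (T (delta x) y) * \<psi> y)"

definition rho :: "('a \<Rightarrow> 'a) \<Rightarrow> ('a set \<Rightarrow> complex) \<Rightarrow> ('a set \<Rightarrow> complex)" where
  "rho g \<psi> = (\<lambda>x. \<psi> (inv g ` x))"

definition equivariant :: "(('a set \<Rightarrow> complex) \<Rightarrow> ('a set \<Rightarrow> complex)) \<Rightarrow> bool" where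
  "equivariant T \<longleftrightarrow> (\<forall>g \<psi>. bij g \<longrightarrow> T (rho g \<psi>) = rho g (T \<psi>))"

definition chi :: "nat \<Rightarrow> 'a set \<Rightarrow> 'a set \<Rightarrow> complex" where
  "chi r y = (\<lambda>x. if card x = r \<and> y \<subseteq> x then 1 else 0)"

text \<open>L2(X_r)_s, the (n-s,s)-isotypic (irreducible) subspace of L2(X_r), realised concretely as
  the functions on X_r lying in the span of the chi r y with |y| = s and orthogonal to
  all chi r z with |z| = s - 1.\<close>
definition L2_comp :: "nat \<Rightarrow> nat \<Rightarrow> ('a::finite set \<Rightarrow> complex) set" where
  "L2_comp r s = {\<psi>. (\<exists>c. \<psi> = (\<lambda>x. \<Sum>y\<in>{y. card y = s}. c y * chi r y x))
                     \<and> (\<forall>z. card z + 1 = s \<longrightarrow> l2_inner \<psi> (chi r z) = 0)}"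

definition is_Lambda :: "nat \<Rightarrow> nat \<Rightarrow> nat
    \<Rightarrow> (('a::finite set \<Rightarrow> complex) \<Rightarrow> ('a set \<Rightarrow> complex)) \<Rightarrow> bool" where
  "is_Lambda r1 r2 s L \<longleftrightarrow>
     equivariant L \<and>
     (\<forall>\<psi>. L \<psi> \<in> L2_comp r2 s) \<and>
     (\<forall>\<psi>. (\<forall>\<phi>\<in>L2_comp r1 s. l2_inner \<psi> \<phi> = 0) \<longrightarrow> L \<psi> = (\<lambda>_. 0)) \<and>
     (\<exists>p :: complex poly. degree p = s \<and> poly p 0 = 1 \<and>
        (\<forall>\<psi> x2. L \<psi> x2 =
           (if card x2 = r2
            then (\<Sum>x1\<in>{x1. card x1 = r1}. poly p (of_nat (card (x2 - x1))) * \<psi> x1)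
            else 0)))"

definition ffall :: "real \<Rightarrow> nat \<Rightarrow> real" where
  "ffall \<alpha> k = (\<Prod>i<k. \<alpha> - real i)"

end

theory Submission
  imports Defs
begin

(*
  Let p be the kernel polynomial of Lambda, so that the (x2, x1) matrix entry is p(k) with
  k = |x2 - x1|.  Since Lambda maps into L2(X_r2)_s, for fixed x1 the function x2 |-> p(k) sums
  to zero over the x2 containing any given z with |z| < s.  Summing over the z of size e inside x1
  turns this into orthogonality of p to the polynomials k |-> [r2 - k]_e, e < s, for the weight
  given by the distribution of k over X_r2.  These span the polynomials of degree < s, so
  degree p = s and p(0) = 1 determine p: it is an explicit Hahn polynomial H.

  The moments of the falling factorials [k]_j against the polynomials [r2 - k]_e are products of
  binomial coefficients.  Hence the orthogonality of H and its squared norm become alternating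
  sums sum_j (-1)^j C(s, j) f(j), which vanish for polynomials f of degree < s and, for the norm,
  are evaluated by partial fractions.  The trace of Lambda Lambda* is C(n, r1) times this squared
  norm.
*)

section \<open>Falling factorials and finite differences\<close>

lemma prod_of_nat_diff_eq_fact_choose:
  "(\<Prod>i<j. of_nat k - of_nat i :: 'b::field_char_0) = fact j * of_nat (k choose j)"
proof -
  have "(of_nat (k choose j) :: 'b) = (\<Prod>i=0..<j. of_nat k - of_nat i) / fact j"
    by (simp add: binomial_gbinomial gbinomial_prod_rev)
  thus ?thesis by (simp add: atLeast0LessThan field_simps)
qed

lemma ffall_of_nat: "ffall (real a) b = fact b * real (a choose b)"
  unfolding ffall_def by (rule prod_of_nat_diff_eq_fact_choose)

lemma ffall_of_nat_pos: "b \<le> a \<Longrightarrow> ffall (real a) b > 0"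
  by (simp add: ffall_of_nat)

lemma ffall_of_nat_eq_0: "a < b \<Longrightarrow> ffall (real a) b = 0"
  by (simp add: ffall_of_nat)

lemma ffall_of_nat_eq_fact_div: "b \<le> a \<Longrightarrow> ffall (real a) b = fact a / fact (a - b)"
  by (simp add: ffall_of_nat fact_binomial)

lemma binomial_diff_binomial_pred:
  assumes "2 * s \<le> n"
  shows "real (n choose s) - (if s = 0 then 0 else real (n choose (s - 1)))
       = fact n * (real n - 2 * real s + 1) / (fact s * fact (n - s + 1))"
proof (cases "s = 0")
  case True
  have "fact (n + 1) = (real n + 1) * (fact n :: real)" by (simp add: algebra_simps)
  thus ?thesis using True by simp
next
  case False
  define D where "D = (fact (s - 1) * fact (n - s) :: real)"
  define E where "E = real n - real s + 1"
  have fact_s: "(fact s :: real) = real s * fact (s - 1)"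
    using False by (metis Suc_pred' fact_Suc neq0_conv of_nat_Suc)
  have "n - s + 1 = Suc (n - s)" using assms by simp
  hence fact_ns: "(fact (n - s + 1) :: real) = E * fact (n - s)"
    using assms by (simp add: E_def of_nat_diff)
  have "real (n choose s) = fact n / (real s * D)"
    using assms binomial_fact[of s n, where 'a=real] by (simp add: fact_s D_def mult.assoc)
  moreover have "real (n choose (s - 1)) = fact n / (E * D)"
  proof -
    have "real (n choose (s - 1)) = fact n / (fact (s - 1) * fact (n - (s - 1)))"
      using assms by (intro binomial_fact) simp
    also have "n - (s - 1) = n - s + 1" using assms False by simp
    finally show ?thesis by (simp only: fact_ns D_def mult_ac)
  qed
  moreover have "real s \<noteq> 0" "E \<noteq> 0" "D \<noteq> 0"
    using assms False by (auto simp: D_def E_def)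
  hence "fact n / (real s * D) - fact n / (E * D) = fact n * (E - real s) / (real s * E * D)"
    by (simp add: field_simps)
  moreover have "fact s * fact (n - s + 1) = real s * E * D"
    unfolding fact_s fact_ns D_def by (simp add: mult_ac)
  ultimately show ?thesis using False by (simp add: E_def)
qed

lemma alternating_sum_choose_Suc:
  fixes f :: "nat \<Rightarrow> 'b::comm_ring_1"
  shows "(\<Sum>j\<le>Suc s. (-1)^j * of_nat (Suc s choose j) * f j)
       = (\<Sum>j\<le>s. (-1)^j * of_nat (s choose j) * (f j - f (Suc j)))"
proof -
  define S where "S = (\<Sum>j\<le>s. (-1)^j * of_nat (s choose Suc j) * f (Suc j))"
  have shift: "(\<Sum>j\<le>Suc s. (-1)^j * of_nat (Suc s choose j) * f j)
     = f 0 - (\<Sum>j\<le>s. (-1)^j * of_nat (s choose j) * f (Suc j)) - S"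
    unfolding S_def
    by (subst sum.atMost_Suc_shift) (simp add: algebra_simps sum_subtractf sum_negf sum.distrib)
  have "(\<Sum>j\<le>s. (-1)^j * of_nat (s choose j) * f j)
     = (\<Sum>j\<le>Suc s. (-1)^j * of_nat (s choose j) * f j)"
    by (simp add: binomial_eq_0)
  also have "\<dots> = f 0 - S"
    unfolding S_def by (subst sum.atMost_Suc_shift) (simp add: sum_negf)
  finally have "(\<Sum>j\<le>s. (-1)^j * of_nat (s choose j) * (f j - f (Suc j)))
      = f 0 - S - (\<Sum>j\<le>s. (-1)^j * of_nat (s choose j) * f (Suc j))"
    by (simp add: algebra_simps sum_subtractf)
  thus ?thesis unfolding shift by simp
qed

lemma degree_less_if_top_coeff_eq_0:
  assumes "degree D \<le> s" and "coeff D s = 0"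
  shows "D = 0 \<or> degree D < s"
  using assms by (cases "degree D = s") auto

lemma alternating_sum_choose_poly_eq_0:
  fixes P :: "'b::idom poly"
  assumes "degree P < s"
  shows "(\<Sum>j\<le>s. (-1)^j * of_nat (s choose j) * poly P (of_nat j)) = 0"
  using assms
proof (induction s arbitrary: P)
  case 0
  thus ?case by simp
next
  case (Suc s)
  show ?case
  proof (cases "degree P = 0")
    case True
    then obtain c where "P = [:c:]" by (rule degree_eq_zeroE)
    thus ?thesis
      using choose_alternating_sum[of "Suc s", where 'a='b] by (simp flip: sum_distrib_right)
  next
    case False
    define \<Delta>P where "\<Delta>P = P - pcompose P [:1, 1:]"
    have "lead_coeff (pcompose P [:1, 1:]) = lead_coeff P" by (subst lead_coeff_comp) auto
    hence "coeff \<Delta>P (degree P) = 0" by (simp add: \<Delta>P_def degree_pcompose)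
    moreover have "degree \<Delta>P \<le> degree P"
      unfolding \<Delta>P_def by (rule degree_diff_le) (simp_all add: degree_pcompose)
    ultimately have "degree \<Delta>P < degree P"
      using False degree_less_if_top_coeff_eq_0[of \<Delta>P "degree P"] by auto
    hence IH: "(\<Sum>j\<le>s. (-1)^j * of_nat (s choose j) * poly \<Delta>P (of_nat j)) = 0"
      using Suc.prems by (intro Suc.IH) simp
    have "(\<Sum>j\<le>Suc s. (-1)^j * of_nat (Suc s choose j) * poly P (of_nat j))
       = (\<Sum>j\<le>s. (-1)^j * of_nat (s choose j) * poly \<Delta>P (of_nat j))"
      unfolding alternating_sum_choose_Suc[of s "\<lambda>j. poly P (of_nat j)"]
      by (simp add: \<Delta>P_def poly_pcompose algebra_simps)
    thus ?thesis using IH by simp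
  qed
qed

lemma alternating_sum_choose_inverse:
  fixes A :: "'b::field_char_0"
  assumes "\<forall>i\<le>s. A \<noteq> of_nat i"
  shows "(\<Sum>j\<le>s. (-1)^j * of_nat (s choose j) / (A - of_nat j))
       = (-1)^s * fact s / (\<Prod>i\<le>s. A - of_nat i)"
  using assms
proof (induction s arbitrary: A)
  case 0
  thus ?case by simp
next
  case (Suc s)
  define P where "P = (\<Prod>i\<le>Suc s. A - of_nat i)"
  have "P \<noteq> 0" using Suc.prems by (auto simp: P_def)
  have P_top: "P = (\<Prod>i\<le>s. A - of_nat i) * (A - of_nat (Suc s))"
    by (simp add: P_def)
  have P_bottom: "P = A * (\<Prod>i\<le>s. (A - 1) - of_nat i)"
    unfolding P_def by (subst prod.atMost_Suc_shift) (simp add: algebra_simps)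
  have "(\<Sum>j\<le>Suc s. (-1)^j * of_nat (Suc s choose j) / (A - of_nat j))
      = (\<Sum>j\<le>s. (-1)^j * of_nat (s choose j) * (1 / (A - of_nat j) - 1 / ((A - 1) - of_nat j)))"
    using alternating_sum_choose_Suc[of s "\<lambda>j. 1 / (A - of_nat j)"] by (simp add: algebra_simps)
  also have "\<dots> = (\<Sum>j\<le>s. (-1)^j * of_nat (s choose j) / (A - of_nat j))
                 - (\<Sum>j\<le>s. (-1)^j * of_nat (s choose j) / ((A - 1) - of_nat j))"
    by (simp add: sum_subtractf algebra_simps)
  also have "\<dots> = (-1)^s * fact s * (1 / (\<Prod>i\<le>s. A - of_nat i) - 1 / (\<Prod>i\<le>s. (A - 1) - of_nat i))"
  proof -
    have "A - 1 \<noteq> of_nat i" if "i \<le> s" for i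
      using Suc.prems that by (auto simp: algebra_simps dest: spec[of _ "Suc i"])
    thus ?thesis using Suc.prems by (simp add: Suc.IH right_diff_distrib)
  qed
  also have "\<dots> = (-1)^s * fact s * ((A - of_nat (Suc s)) / P - A / P)"
  proof -
    have "(\<Prod>i\<le>s. A - of_nat i) \<noteq> 0" "A - of_nat (Suc s) \<noteq> 0"
      using \<open>P \<noteq> 0\<close> P_top by auto
    hence "1 / (\<Prod>i\<le>s. A - of_nat i) = (A - of_nat (Suc s)) / P"
      unfolding P_top by simp
    moreover have "A \<noteq> 0" "(\<Prod>i\<le>s. (A - 1) - of_nat i) \<noteq> 0"
      using \<open>P \<noteq> 0\<close> P_bottom by auto
    hence "1 / (\<Prod>i\<le>s. (A - 1) - of_nat i) = A / P"
      unfolding P_bottom by simp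
    ultimately show ?thesis by simp
  qed
  also have "\<dots> = (-1)^Suc s * fact (Suc s) / P"
    by (simp add: diff_divide_distrib[symmetric] algebra_simps)
  finally show ?case unfolding P_def .
qed

lemma alternating_sum_choose_poly_div:
  fixes P :: "'b::field_char_0 poly"
  assumes "degree P \<le> s" and "\<forall>i\<le>s. A \<noteq> of_nat i"
  shows "(\<Sum>j\<le>s. (-1)^j * of_nat (s choose j) * poly P (of_nat j) / (A - of_nat j))
       = (-1)^s * fact s * poly P A / (\<Prod>i\<le>s. A - of_nat i)"
proof -
  have "poly (P - [:poly P A:]) A = 0" by simp
  then obtain G where G: "P - [:poly P A:] = [:-A, 1:] * G"
    unfolding poly_eq_0_iff_dvd by (auto elim: dvdE)
  have G_sum: "(\<Sum>j\<le>s. (-1)^j * of_nat (s choose j) * poly G (of_nat j)) = 0"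
  proof (cases "G = 0")
    case False
    have "Suc (degree G) = degree (P - [:poly P A:])"
      using False unfolding G by (subst degree_mult_eq) auto
    also have "\<dots> \<le> s" using assms(1) by (intro degree_diff_le) auto
    finally show ?thesis by (intro alternating_sum_choose_poly_eq_0) simp
  qed simp
  have pointwise: "poly P (of_nat j) / (A - of_nat j) = poly P A / (A - of_nat j) - poly G (of_nat j)"
    if "j \<le> s" for j
  proof -
    have "poly P (of_nat j) - poly P A = (of_nat j - A) * poly G (of_nat j)"
      using arg_cong[OF G, of "\<lambda>q. poly q (of_nat j)"] by (simp add: algebra_simps)
    thus ?thesis using assms(2) that by (simp add: field_simps)
  qed
  have "(\<Sum>j\<le>s. (-1)^j * of_nat (s choose j) * poly P (of_nat j) / (A - of_nat j))
      = (\<Sum>j\<le>s. poly P A * ((-1)^j * of_nat (s choose j) / (A - of_nat j))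
          - (-1)^j * of_nat (s choose j) * poly G (of_nat j))"
  proof (rule sum.cong)
    fix j assume "j \<in> {..s}"
    have "(-1)^j * of_nat (s choose j) * poly P (of_nat j) / (A - of_nat j)
        = (-1)^j * of_nat (s choose j) * (poly P (of_nat j) / (A - of_nat j))"
      by simp
    also have "\<dots> = (-1)^j * of_nat (s choose j) * (poly P A / (A - of_nat j) - poly G (of_nat j))"
      using \<open>j \<in> {..s}\<close> by (subst pointwise) auto
    finally show "(-1)^j * of_nat (s choose j) * poly P (of_nat j) / (A - of_nat j)
        = poly P A * ((-1)^j * of_nat (s choose j) / (A - of_nat j))
          - (-1)^j * of_nat (s choose j) * poly G (of_nat j)"
      by (simp add: algebra_simps)
  qed simp
  also have "\<dots> = poly P A * (\<Sum>j\<le>s. (-1)^j * of_nat (s choose j) / (A - of_nat j))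
        - (\<Sum>j\<le>s. (-1)^j * of_nat (s choose j) * poly G (of_nat j))"
    by (simp add: sum_subtractf sum_distrib_left)
  finally show ?thesis using G_sum alternating_sum_choose_inverse[OF assms(2)] by simp
qed

section \<open>Falling factorial polynomials\<close>

definition falling_poly :: "nat \<Rightarrow> 'b::comm_ring_1 poly" where
  "falling_poly j = (\<Prod>i<j. [:- of_nat i, 1:])"

definition reflected_falling_poly :: "'b::comm_ring_1 \<Rightarrow> nat \<Rightarrow> 'b poly" where
  "reflected_falling_poly a e = (\<Prod>i<e. [:a - of_nat i, -1:])"

lemma poly_falling_poly: "poly (falling_poly j) x = (\<Prod>i<j. x - of_nat i)"
  by (simp add: falling_poly_def poly_prod)

lemma poly_reflected_falling_poly: "poly (reflected_falling_poly a e) x = (\<Prod>i<e. a - of_nat i - x)"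
  by (simp add: reflected_falling_poly_def poly_prod)

lemma poly_falling_poly_real: "poly (falling_poly j) (x::real) = ffall x j"
  by (simp add: poly_falling_poly ffall_def)

lemma poly_falling_poly_of_nat:
  "poly (falling_poly j) (of_nat k :: 'b::field_char_0) = fact j * of_nat (k choose j)"
  by (simp add: poly_falling_poly prod_of_nat_diff_eq_fact_choose)

lemma poly_reflected_falling_poly_of_nat:
  assumes "k \<le> a"
  shows "poly (reflected_falling_poly (of_nat a) e) (of_nat k :: 'b::field_char_0)
    = fact e * of_nat ((a - k) choose e)"
proof -
  have "poly (reflected_falling_poly (of_nat a) e) (of_nat k :: 'b) = (\<Prod>i<e. of_nat (a - k) - of_nat i)"
    unfolding poly_reflected_falling_poly using assms by (simp add: algebra_simps)
  thus ?thesis by (simp add: prod_of_nat_diff_eq_fact_choose)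
qed

lemma reflected_falling_poly_eq_falling_poly:
  "(-1)^s * poly (reflected_falling_poly a s) b
    = poly (falling_poly s) (b - a + of_nat s - 1 :: 'b::comm_ring_1)"
proof (induction s)
  case (Suc s)
  have "(-1)^Suc s * poly (reflected_falling_poly a (Suc s)) b
      = (-1)^s * poly (reflected_falling_poly a s) b * (b - a + of_nat s)"
    by (simp add: poly_reflected_falling_poly algebra_simps)
  also have "\<dots> = poly (falling_poly (Suc s)) (b - a + of_nat (Suc s) - 1)"
    unfolding Suc.IH poly_falling_poly by (subst prod.lessThan_Suc_shift) (simp add: algebra_simps)
  finally show ?case .
qed (simp add: reflected_falling_poly_def falling_poly_def)

lemma degree_falling_poly: "degree (falling_poly j :: 'b::idom poly) = j"
  unfolding falling_poly_def by (subst degree_prod_eq_sum_degree) auto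

lemma coeff_falling_poly_top: "coeff (falling_poly j :: 'b::idom poly) j = 1"
proof -
  have "coeff (falling_poly j :: 'b poly) j = lead_coeff (falling_poly j :: 'b poly)"
    by (simp add: degree_falling_poly)
  thus ?thesis by (simp add: falling_poly_def lead_coeff_prod)
qed

lemma degree_reflected_falling_poly: "degree (reflected_falling_poly a e :: 'b::idom poly) = e"
  unfolding reflected_falling_poly_def by (subst degree_prod_eq_sum_degree) auto

lemma coeff_reflected_falling_poly_top:
  "coeff (reflected_falling_poly a e :: 'b::idom poly) e = (-1)^e"
proof -
  have "coeff (reflected_falling_poly a e) e = lead_coeff (reflected_falling_poly a e)"
    by (simp add: degree_reflected_falling_poly)
  thus ?thesis by (simp add: reflected_falling_poly_def lead_coeff_prod)
qed

lemma reflected_falling_poly_basis: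
  fixes D :: "'b::idom poly"
  assumes "degree D \<le> s"
  shows "\<exists>\<alpha>. D = (\<Sum>e\<le>s. smult (\<alpha> e) (reflected_falling_poly a e))"
  using assms
proof (induction s arbitrary: D)
  case 0
  then obtain c where "D = [:c:]" by (metis degree_eq_zeroE le_zero_eq)
  hence "D = (\<Sum>e\<le>0. smult c (reflected_falling_poly a e))"
    by (simp add: reflected_falling_poly_def)
  thus ?case by (intro exI[of _ "\<lambda>_. c"])
next
  case (Suc s)
  define c where "c = coeff D (Suc s) * (-1)^Suc s"
  define D' where "D' = D - smult c (reflected_falling_poly a (Suc s))"
  have "coeff D' (Suc s) = 0"
    by (simp add: D'_def c_def coeff_reflected_falling_poly_top flip: power_mult_distrib)
  moreover have "degree D' \<le> Suc s"
    unfolding D'_def using Suc.prems by (intro degree_diff_le) (simp_all add: degree_reflected_falling_poly)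
  ultimately have "degree D' \<le> s"
    using degree_less_if_top_coeff_eq_0[of D' "Suc s"] by auto
  then obtain \<alpha> where "D' = (\<Sum>e\<le>s. smult (\<alpha> e) (reflected_falling_poly a e))"
    using Suc.IH by blast
  hence "D = (\<Sum>e\<le>Suc s. smult ((\<alpha>(Suc s := c)) e) (reflected_falling_poly a e))"
    unfolding D'_def by (simp add: diff_eq_eq)
  thus ?case by blast
qed

section \<open>Counting subsets\<close>

lemma sum_UNIV_if_eq:
  "(\<Sum>x\<in>(UNIV :: 'b::finite set). if P x then f x else 0) = (\<Sum>x | P x. f x)"
  by (simp add: sum.inter_filter[symmetric])

lemma sum_weighted_swap:
  assumes "finite A" and "finite B"
  shows "(\<Sum>a\<in>A. \<Sum>b\<in>{b\<in>B. R a b}. f b) = (\<Sum>b\<in>B. of_nat (card {a\<in>A. R a b}) * f b)"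
  using sum.swap_restrict[OF assms, of "\<lambda>_. f" R] by simp

lemma card_supersets_with_card:
  assumes "finite X" and "w \<subseteq> X"
  shows "card {z. w \<subseteq> z \<and> z \<subseteq> X \<and> card z = m}
    = (if card w \<le> m then (card X - card w) choose (m - card w) else 0)"
proof (cases "card w \<le> m")
  case True
  have fin: "finite w" "finite (X - w)" using assms finite_subset by auto
  have "{z. w \<subseteq> z \<and> z \<subseteq> X \<and> card z = m} = (\<lambda>B. B \<union> w) ` {B. B \<subseteq> X - w \<and> card B = m - card w}"
  proof (intro equalityI subsetI)
    fix z assume z: "z \<in> {z. w \<subseteq> z \<and> z \<subseteq> X \<and> card z = m}"
    hence "z = (z - w) \<union> w" "card (z - w) = m - card w"
      using fin assms(1) by (auto simp: card_Diff_subset intro: finite_subset)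
    thus "z \<in> (\<lambda>B. B \<union> w) ` {B. B \<subseteq> X - w \<and> card B = m - card w}" using z by blast
  next
    fix z assume "z \<in> (\<lambda>B. B \<union> w) ` {B. B \<subseteq> X - w \<and> card B = m - card w}"
    then obtain B where B: "B \<subseteq> X - w" "card B = m - card w" "z = B \<union> w" by blast
    have "card z = card B + card w"
      unfolding B(3) using B(1) fin by (intro card_Un_disjoint) (auto intro: finite_subset)
    thus "z \<in> {z. w \<subseteq> z \<and> z \<subseteq> X \<and> card z = m}" using B True assms(2) by auto
  qed
  moreover have "inj_on (\<lambda>B. B \<union> w) {B. B \<subseteq> X - w \<and> card B = m - card w}"
    by (rule inj_onI) blast
  ultimately show ?thesis
    using True assms by (simp add: card_image n_subsets card_Diff_subset fin)
next
  case False
  have "card w \<le> card z" if "w \<subseteq> z" "z \<subseteq> X" for z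
    using that assms(1) by (intro card_mono) (auto intro: finite_subset)
  hence "{z. w \<subseteq> z \<and> z \<subseteq> X \<and> card z = m} = {}" using False by fastforce
  thus ?thesis using False by (subst \<open>_ = {}\<close>) simp
qed

lemma card_subsets_split:
  assumes "finite S"
  shows "card {w. w \<subseteq> S \<and> card (w - T) = j \<and> card (w \<inter> T) = e}
    = (card (S - T) choose j) * (card (S \<inter> T) choose e)"
proof -
  define P where "P = {a. a \<subseteq> S - T \<and> card a = j} \<times> {b. b \<subseteq> S \<inter> T \<and> card b = e}"
  have image: "{w. w \<subseteq> S \<and> card (w - T) = j \<and> card (w \<inter> T) = e} = (\<lambda>(a, b). a \<union> b) ` P"
  proof (intro equalityI subsetI)
    fix w assume "w \<in> {w. w \<subseteq> S \<and> card (w - T) = j \<and> card (w \<inter> T) = e}"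
    hence "(w - T, w \<inter> T) \<in> P" "w = (\<lambda>(a, b). a \<union> b) (w - T, w \<inter> T)"
      unfolding P_def by auto
    thus "w \<in> (\<lambda>(a, b). a \<union> b) ` P" by blast
  next
    fix w assume "w \<in> (\<lambda>(a, b). a \<union> b) ` P"
    then obtain a b where "(a, b) \<in> P" "w = a \<union> b" by auto
    moreover from this have "w - T = a" "w \<inter> T = b" unfolding P_def by auto
    ultimately show "w \<in> {w. w \<subseteq> S \<and> card (w - T) = j \<and> card (w \<inter> T) = e}"
      unfolding P_def by auto
  qed
  have "inj_on (\<lambda>(a, b). a \<union> b) P"
    by (rule inj_onI) (auto simp: P_def)
  hence "card {w. w \<subseteq> S \<and> card (w - T) = j \<and> card (w \<inter> T) = e} = card P"
    unfolding image by (rule card_image)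
  also have "\<dots> = (card (S - T) choose j) * (card (S \<inter> T) choose e)"
    unfolding P_def card_cartesian_product using assms n_subsets[of "S - T" j] n_subsets[of "S \<inter> T" e] by simp
  finally show ?thesis .
qed

lemma sum_choose_card_Diff_mult_choose_card_Int:
  fixes x1 :: "'a::finite set"
  assumes "card x1 = r1"
  shows "(\<Sum>x2 | card x2 = r2. (card (x2 - x1) choose j) * (card (x2 \<inter> x1) choose e))
    = ((card (UNIV :: 'a set) - r1) choose j) * (r1 choose e)
      * (if j + e \<le> r2 then (card (UNIV :: 'a set) - (j + e)) choose (r2 - (j + e)) else 0)"
proof -
  define W where "W = {w::'a set. card (w - x1) = j \<and> card (w \<inter> x1) = e}"
  have "(card (x2 - x1) choose j) * (card (x2 \<inter> x1) choose e) = card {w\<in>W. w \<subseteq> x2}" for x2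
  proof -
    have "{w\<in>W. w \<subseteq> x2} = {w. w \<subseteq> x2 \<and> card (w - x1) = j \<and> card (w \<inter> x1) = e}"
      unfolding W_def by blast
    thus ?thesis using card_subsets_split[of x2 x1 j e] by simp
  qed
  hence "(\<Sum>x2 | card x2 = r2. (card (x2 - x1) choose j) * (card (x2 \<inter> x1) choose e))
      = (\<Sum>w\<in>W. card {x2. card x2 = r2 \<and> w \<subseteq> x2})"
    using sum_weighted_swap[of "{x2. card x2 = r2}" W "\<lambda>_. 1::nat" "\<lambda>x2 w. w \<subseteq> x2"] by simp
  also have "\<dots> = (\<Sum>w\<in>W. if j + e \<le> r2 then (card (UNIV :: 'a set) - (j + e)) choose (r2 - (j + e)) else 0)"
  proof (rule sum.cong)
    fix w assume "w \<in> W"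
    hence "card w = j + e" unfolding W_def using card_Int_Diff[of w x1] by simp
    thus "card {x2. card x2 = r2 \<and> w \<subseteq> x2}
        = (if j + e \<le> r2 then (card (UNIV :: 'a set) - (j + e)) choose (r2 - (j + e)) else 0)"
      using card_supersets_with_card[of UNIV w r2]
      by (simp add: Collect_conj_eq Int_commute)
  qed simp
  also have "card W = ((card (UNIV :: 'a set) - r1) choose j) * (r1 choose e)"
    using card_subsets_split[of UNIV x1 j e] assms unfolding W_def by (simp add: card_Diff_subset)
  ultimately show ?thesis by simp
qed

lemma exists_card_Diff_eq:
  fixes x1 :: "'a::finite set"
  assumes "k \<le> card (UNIV :: 'a set) - card x1" and "k \<le> r2" and "r2 \<le> k + card x1"
  shows "\<exists>x2. card x2 = r2 \<and> card (x2 - x1) = k"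
proof -
  have "k \<le> card (UNIV - x1)" using assms(1) by (simp add: card_Diff_subset)
  then obtain A where A: "A \<subseteq> UNIV - x1" "card A = k" by (rule obtain_subset_with_card_n)
  have "r2 - k \<le> card x1" using assms(3) by simp
  then obtain B where B: "B \<subseteq> x1" "card B = r2 - k" by (rule obtain_subset_with_card_n)
  have "A \<inter> B = {}" using A(1) B(1) by blast
  hence "card (A \<union> B) = r2" using A(2) B(2) assms(2) by (simp add: card_Un_disjoint)
  moreover have "A \<union> B - x1 = A" using A(1) B(1) by blast
  ultimately show ?thesis using A(2) by (intro exI[of _ "A \<union> B"]) simp
qed

lemma card_image_card_Diff_ge:
  fixes x1 :: "'a::finite set"
  defines "n \<equiv> card (UNIV :: 'a set)"
  assumes x1: "card x1 = r1" and bounds: "r2 \<le> n" "s \<le> r1" "s \<le> n - r1" "s \<le> r2" "s \<le> n - r2"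
  shows "s \<le> card ((\<lambda>x2. card (x2 - x1)) ` {x2. card x2 = r2})"
proof -
  define k0 where "k0 = r2 - min r1 r2"
  have "r1 \<le> n" using card_mono[of "UNIV :: 'a set" x1] x1 unfolding n_def by simp
  have "{k0..k0 + s} \<subseteq> (\<lambda>x2. card (x2 - x1)) ` {x2. card x2 = r2}"
  proof
    fix k assume "k \<in> {k0..k0 + s}"
    hence "k \<le> n - r1 \<and> k \<le> r2 \<and> r2 \<le> k + r1"
      using bounds \<open>r1 \<le> n\<close> unfolding k0_def
      by (cases "r1 \<le> r2") (simp_all add: min_def, linarith+)
    then obtain x2 where "card x2 = r2" "card (x2 - x1) = k"
      using exists_card_Diff_eq[of k x1 r2] x1 unfolding n_def by auto
    thus "k \<in> (\<lambda>x2. card (x2 - x1)) ` {x2. card x2 = r2}" by force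
  qed
  hence "card {k0..k0 + s} \<le> card ((\<lambda>x2. card (x2 - x1)) ` {x2. card x2 = r2})"
    by (intro card_mono) simp_all
  thus ?thesis by simp
qed

section \<open>A discrete pairing of polynomials\<close>

definition poly_pairing :: "'b set \<Rightarrow> ('b \<Rightarrow> nat) \<Rightarrow> 'c::comm_semiring_1 poly \<Rightarrow> 'c poly \<Rightarrow> 'c" where
  "poly_pairing X \<kappa> P Q = (\<Sum>x\<in>X. poly P (of_nat (\<kappa> x)) * poly Q (of_nat (\<kappa> x)))"

lemma poly_pairing_commute: "poly_pairing X \<kappa> P Q = poly_pairing X \<kappa> Q P"
  by (simp add: poly_pairing_def mult.commute)

lemma poly_pairing_diff_left:
  "poly_pairing X \<kappa> (P - Q) R = poly_pairing X \<kappa> P R - poly_pairing X \<kappa> Q R"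
  for P Q R :: "'c::comm_ring_1 poly"
  by (simp add: poly_pairing_def algebra_simps sum_subtractf)

lemma poly_pairing_smult_left:
  "poly_pairing X \<kappa> (smult c P) Q = c * poly_pairing X \<kappa> P Q"
  by (simp add: poly_pairing_def sum_distrib_left mult.assoc)

lemma poly_pairing_sum_smult_left:
  "poly_pairing X \<kappa> (\<Sum>j\<in>J. smult (c j) (P j)) Q = (\<Sum>j\<in>J. c j * poly_pairing X \<kappa> (P j) Q)"
  by (simp add: poly_pairing_def poly_sum sum_distrib_left sum_distrib_right mult.assoc sum.swap[of _ J])

lemma poly_pairing_eq_0_if_orthogonal:
  fixes Q D :: "'c::idom poly"
  assumes "\<forall>e<s. poly_pairing X \<kappa> Q (reflected_falling_poly a e) = 0" and "degree D < s"
  shows "poly_pairing X \<kappa> Q D = 0"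
proof -
  obtain t where "s = Suc t" using assms(2) by (cases s) auto
  then obtain \<alpha> where D: "D = (\<Sum>e\<le>t. smult (\<alpha> e) (reflected_falling_poly a e))"
    using reflected_falling_poly_basis[of D t a] assms(2) by auto
  have "poly_pairing X \<kappa> Q D = poly_pairing X \<kappa> D Q" by (rule poly_pairing_commute)
  also have "\<dots> = (\<Sum>e\<le>t. \<alpha> e * poly_pairing X \<kappa> (reflected_falling_poly a e) Q)"
    unfolding D poly_pairing_sum_smult_left ..
  also have "\<dots> = 0"
    using assms(1) \<open>s = Suc t\<close> by (simp add: poly_pairing_commute[of X \<kappa> _ Q])
  finally show ?thesis .
qed

lemma poly_pairing_self_eq_lead_pairing:
  fixes Q :: "'c::idom poly"
  assumes "\<forall>e<s. poly_pairing X \<kappa> Q (reflected_falling_poly a e) = 0" and "degree Q \<le> s"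
  shows "poly_pairing X \<kappa> Q Q = coeff Q s * (-1)^s * poly_pairing X \<kappa> Q (reflected_falling_poly a s)"
proof -
  define c where "c = coeff Q s * (-1)^s"
  define D where "D = Q - smult c (reflected_falling_poly a s)"
  have "coeff D s = 0"
    by (simp add: D_def c_def coeff_reflected_falling_poly_top flip: power_add mult_2)
  moreover have "degree D \<le> s"
    unfolding D_def using assms(2) by (intro degree_diff_le) (simp_all add: degree_reflected_falling_poly)
  ultimately have "D = 0 \<or> degree D < s"
    by (rule degree_less_if_top_coeff_eq_0[rotated])
  hence "poly_pairing X \<kappa> Q D = 0"
    using poly_pairing_eq_0_if_orthogonal[OF assms(1)] by (auto simp: poly_pairing_def)
  moreover have "poly_pairing X \<kappa> D Q
      = poly_pairing X \<kappa> Q Q - c * poly_pairing X \<kappa> Q (reflected_falling_poly a s)"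
    unfolding D_def poly_pairing_diff_left poly_pairing_smult_left
      poly_pairing_commute[of X \<kappa> "reflected_falling_poly a s" Q] ..
  ultimately show ?thesis
    unfolding c_def[symmetric] poly_pairing_commute[of X \<kappa> Q D] by simp
qed

lemma orthogonal_poly_eq_0:
  fixes D :: "complex poly"
  assumes "finite X" and "\<forall>e<s. poly_pairing X \<kappa> D (reflected_falling_poly a e) = 0"
    and "degree D < s" and "s \<le> card (\<kappa> ` X)"
  shows "D = 0"
proof (rule ccontr)
  assume "D \<noteq> 0"
  have "poly_pairing X \<kappa> D (map_poly cnj D) = 0"
    by (rule poly_pairing_eq_0_if_orthogonal[OF assms(2)])
      (rule le_less_trans[OF map_poly_degree_leq assms(3)])
  moreover have "poly (map_poly cnj D) (of_nat k) = cnj (poly D (of_nat k))" for k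
    using poly_cnj[of D "of_nat k"] by simp
  ultimately have "(\<Sum>x\<in>X. poly D (of_nat (\<kappa> x)) * cnj (poly D (of_nat (\<kappa> x)))) = 0"
    by (simp add: poly_pairing_def)
  hence "(\<Sum>x\<in>X. complex_of_real ((cmod (poly D (of_nat (\<kappa> x))))\<^sup>2)) = 0"
    by (simp only: complex_norm_square)
  hence "(\<Sum>x\<in>X. (cmod (poly D (of_nat (\<kappa> x))))\<^sup>2) = 0"
    by (simp only: of_real_sum[symmetric] of_real_eq_0_iff)
  hence "of_nat ` \<kappa> ` X \<subseteq> {z. poly D z = 0}"
    using assms(1) by (subst (asm) sum_nonneg_eq_0_iff) auto
  hence "card (of_nat ` \<kappa> ` X :: complex set) \<le> card {z. poly D z = 0}"
    using \<open>D \<noteq> 0\<close> by (intro card_mono poly_roots_finite)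
  also have "\<dots> \<le> degree D" using \<open>D \<noteq> 0\<close> by (rule card_poly_roots_bound)
  finally show False
    using assms(3,4) card_image[of "of_nat :: nat \<Rightarrow> complex" "\<kappa> ` X"] by (simp add: inj_on_def)
qed

lemma orthogonal_poly_unique:
  fixes p H :: "complex poly"
  assumes "finite X" and "s \<le> card (\<kappa> ` X)"
    and "degree p \<le> s" and "degree H \<le> s" and "coeff H s \<noteq> 0"
    and "\<forall>e<s. poly_pairing X \<kappa> p (reflected_falling_poly a e) = 0"
    and "\<forall>e<s. poly_pairing X \<kappa> H (reflected_falling_poly a e) = 0"
    and "poly p 0 = 1" and "poly H 0 = 1"
  shows "p = H"
proof -
  define \<mu> where "\<mu> = coeff (p - H) s / coeff H s"
  define D where "D = p - H - smult \<mu> H"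
  have "coeff D s = 0" using assms(5) by (simp add: D_def \<mu>_def)
  moreover have "degree D \<le> s"
    unfolding D_def using assms(3,4) by (intro degree_diff_le) (simp_all add: degree_diff_le)
  ultimately have "D = 0 \<or> degree D < s"
    by (rule degree_less_if_top_coeff_eq_0[rotated])
  moreover have "\<forall>e<s. poly_pairing X \<kappa> D (reflected_falling_poly a e) = 0"
    using assms(6,7) by (simp add: D_def poly_pairing_diff_left poly_pairing_smult_left)
  ultimately have "D = 0" using orthogonal_poly_eq_0[OF assms(1) _ _ assms(2)] by blast
  hence "p - H = smult \<mu> H" by (simp add: D_def)
  hence "poly (p - H) 0 = poly (smult \<mu> H) 0" by simp
  hence "\<mu> = 0" using assms(8,9) by simp
  thus "p = H" using \<open>p - H = smult \<mu> H\<close> by simp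
qed

definition falling_moment :: "nat \<Rightarrow> nat \<Rightarrow> nat \<Rightarrow> nat \<Rightarrow> nat \<Rightarrow> real" where
  "falling_moment n r1 r2 j e = ffall (real (n - r1)) j * ffall (real r1) e
    * (if j + e \<le> r2 then real ((n - (j + e)) choose (r2 - (j + e))) else 0)"

lemma poly_pairing_falling_reflected_falling:
  fixes x1 :: "'a::finite set"
  assumes "card x1 = r1"
  shows "poly_pairing {x2. card x2 = r2} (\<lambda>x2. card (x2 - x1))
      (falling_poly j) (reflected_falling_poly (of_nat r2) e)
    = complex_of_real (falling_moment (card (UNIV :: 'a set)) r1 r2 j e)"
proof -
  have pointwise: "poly (falling_poly j) (of_nat (card (x2 - x1)))
          * poly (reflected_falling_poly (of_nat r2) e) (of_nat (card (x2 - x1)))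
      = (fact j * fact e :: complex) * of_nat ((card (x2 - x1) choose j) * (card (x2 \<inter> x1) choose e))"
    if "x2 \<in> {x2. card x2 = r2}" for x2 :: "'a set"
  proof -
    have "r2 = card (x2 \<inter> x1) + card (x2 - x1)" using that card_Int_Diff[of x2 x1] by simp
    hence "card (x2 - x1) \<le> r2" "r2 - card (x2 - x1) = card (x2 \<inter> x1)" by linarith+
    thus ?thesis
      unfolding poly_falling_poly_of_nat poly_reflected_falling_poly_of_nat[OF \<open>_ \<le> r2\<close>]
      by simp
  qed
  have "poly_pairing {x2. card x2 = r2} (\<lambda>x2. card (x2 - x1))
      (falling_poly j) (reflected_falling_poly (of_nat r2) e)
    = (fact j * fact e :: complex)
      * of_nat (\<Sum>x2 | card x2 = r2. (card (x2 - x1) choose j) * (card (x2 \<inter> x1) choose e))"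
    unfolding poly_pairing_def of_nat_sum sum_distrib_left by (rule sum.cong) (use pointwise in auto)
  also have "\<dots> = complex_of_real (falling_moment (card (UNIV :: 'a set)) r1 r2 j e)"
    unfolding sum_choose_card_Diff_mult_choose_card_Int[OF assms] falling_moment_def ffall_of_nat by simp
  finally show ?thesis .
qed

section \<open>Orthogonality relations of the isotypic component\<close>

lemma l2_inner_chi: "l2_inner f (chi r z) = (\<Sum>x | card x = r \<and> z \<subseteq> x. f x)"
proof -
  have "l2_inner f (chi r z) = (\<Sum>x\<in>UNIV. if card x = r \<and> z \<subseteq> x then f x else 0)"
    unfolding l2_inner_def chi_def by (rule sum.cong) auto
  thus ?thesis by (simp only: sum_UNIV_if_eq)
qed

lemma L2_comp_sum_supersets_eq_0:
  fixes \<psi> :: "'a::finite set \<Rightarrow> complex"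
  assumes "\<psi> \<in> L2_comp r s" and "s \<le> r" and "card z < s"
  shows "(\<Sum>x | card x = r \<and> z \<subseteq> x. \<psi> x) = 0"
proof -
  define Z where "Z = {z'. z \<subseteq> z' \<and> card z' = s - 1}"
  define c where "c = (r - card z) choose (s - 1 - card z)"
  have "card {z'\<in>Z. z' \<subseteq> x} = (if z \<subseteq> x then c else 0)" if "card x = r" for x
  proof -
    have "{z'\<in>Z. z' \<subseteq> x} = {z'. z \<subseteq> z' \<and> z' \<subseteq> x \<and> card z' = s - 1}" unfolding Z_def by blast
    thus ?thesis
      using card_supersets_with_card[of x z "s - 1"] assms(3) that unfolding c_def by auto
  qed
  hence "(\<Sum>z'\<in>Z. \<Sum>x\<in>{x\<in>{x. card x = r}. z' \<subseteq> x}. \<psi> x)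
      = (\<Sum>x\<in>{x. card x = r}. if z \<subseteq> x then of_nat c * \<psi> x else 0)"
    unfolding sum_weighted_swap[OF finite finite] by (intro sum.cong) auto
  also have "\<dots> = (\<Sum>x\<in>{x\<in>{x. card x = r}. z \<subseteq> x}. of_nat c * \<psi> x)"
    by (rule sum.inter_filter[symmetric]) simp
  also have "\<dots> = of_nat c * (\<Sum>x\<in>{x\<in>{x. card x = r}. z \<subseteq> x}. \<psi> x)"
    by (rule sum_distrib_left[symmetric])
  finally have "(\<Sum>z'\<in>Z. \<Sum>x | card x = r \<and> z' \<subseteq> x. \<psi> x)
      = of_nat c * (\<Sum>x | card x = r \<and> z \<subseteq> x. \<psi> x)"
    by simp
  moreover have "(\<Sum>x | card x = r \<and> z' \<subseteq> x. \<psi> x) = 0" if "z' \<in> Z" for z'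
  proof -
    have "card z' + 1 = s" using that assms(3) unfolding Z_def by simp
    thus ?thesis using assms(1) l2_inner_chi[of \<psi> r z'] unfolding L2_comp_def by auto
  qed
  moreover have "c \<noteq> 0" using assms(2,3) unfolding c_def by simp
  ultimately show ?thesis by simp
qed

lemma L2_comp_poly_pairing_eq_0:
  fixes f :: "'a::finite set \<Rightarrow> complex" and x1 :: "'a set"
  assumes "f \<in> L2_comp r2 s" and "s \<le> r2" and "e < s"
    and "\<And>x2. card x2 = r2 \<Longrightarrow> f x2 = poly p (of_nat (card (x2 - x1)))"
  shows "poly_pairing {x2. card x2 = r2} (\<lambda>x2. card (x2 - x1)) p
    (reflected_falling_poly (of_nat r2) e) = 0"
proof -
  define Z where "Z = {z. z \<subseteq> x1 \<and> card z = e}"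
  have "poly (reflected_falling_poly (of_nat r2) e) (of_nat (card (x2 - x1)))
      = (fact e :: complex) * of_nat (card {z\<in>Z. z \<subseteq> x2})" if "card x2 = r2" for x2
  proof -
    have "r2 = card (x2 \<inter> x1) + card (x2 - x1)" using that card_Int_Diff[of x2 x1] by simp
    hence "card (x2 - x1) \<le> r2" "r2 - card (x2 - x1) = card (x2 \<inter> x1)" by linarith+
    moreover have "card {z\<in>Z. z \<subseteq> x2} = card (x2 \<inter> x1) choose e"
    proof -
      have "{z\<in>Z. z \<subseteq> x2} = {z. z \<subseteq> x2 \<inter> x1 \<and> card z = e}" unfolding Z_def by blast
      thus ?thesis using n_subsets[of "x2 \<inter> x1" e] by simp
    qed
    ultimately show ?thesis by (simp add: poly_reflected_falling_poly_of_nat)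
  qed
  hence "poly_pairing {x2. card x2 = r2} (\<lambda>x2. card (x2 - x1)) p (reflected_falling_poly (of_nat r2) e)
      = fact e * (\<Sum>x2 | card x2 = r2. of_nat (card {z\<in>Z. z \<subseteq> x2}) * f x2)"
    unfolding poly_pairing_def sum_distrib_left by (intro sum.cong) (auto simp: assms(4))
  also have "\<dots> = fact e * (\<Sum>z\<in>Z. \<Sum>x2 | card x2 = r2 \<and> z \<subseteq> x2. f x2)"
    using sum_weighted_swap[of Z "{x2. card x2 = r2}" f "\<lambda>z x2. z \<subseteq> x2"] by simp
  also have "\<dots> = 0"
    using L2_comp_sum_supersets_eq_0[OF assms(1,2)] assms(3) unfolding Z_def by simp
  finally show ?thesis .
qed

section \<open>The Hahn polynomial\<close>

(* H(k) is the terminating hypergeometric series 3F2(-s, s - n - 1, -k; r1 - n, -r2; 1). *)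

definition hahn_coeff :: "nat \<Rightarrow> nat \<Rightarrow> nat \<Rightarrow> nat \<Rightarrow> nat \<Rightarrow> real" where
  "hahn_coeff n r1 r2 s j = (-1)^j * real (s choose j) * ffall (real (n - s + 1)) j
    / (ffall (real (n - r1)) j * ffall (real r2) j)"

definition hahn_poly :: "nat \<Rightarrow> nat \<Rightarrow> nat \<Rightarrow> nat \<Rightarrow> complex poly" where
  "hahn_poly n r1 r2 s = (\<Sum>j\<le>s. smult (complex_of_real (hahn_coeff n r1 r2 s j)) (falling_poly j))"

lemma poly_hahn_poly_0: "poly (hahn_poly n r1 r2 s) 0 = 1"
proof -
  have "poly (falling_poly (Suc j)) (0::complex) = 0" for j
    by (simp add: poly_falling_poly prod.lessThan_Suc_shift del: prod.lessThan_Suc)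
  moreover have "falling_poly 0 = (1 :: complex poly)" "ffall x 0 = 1" for x
    by (simp_all add: falling_poly_def ffall_def)
  ultimately show ?thesis
    by (simp add: hahn_poly_def poly_sum sum.atMost_shift hahn_coeff_def)
qed

lemma degree_hahn_poly: "degree (hahn_poly n r1 r2 s) \<le> s"
  unfolding hahn_poly_def
  by (intro degree_sum_le) (auto intro: order.trans[OF degree_smult_le] simp: degree_falling_poly)

lemma coeff_hahn_poly_top: "coeff (hahn_poly n r1 r2 s) s = complex_of_real (hahn_coeff n r1 r2 s s)"
proof -
  have "coeff (falling_poly j :: complex poly) s = 0" if "j < s" for j
    using that by (simp add: degree_falling_poly coeff_eq_0)
  thus ?thesis
    by (simp add: hahn_poly_def coeff_sum lessThan_Suc_atMost[symmetric] coeff_falling_poly_top)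
qed

lemma hahn_coeff_top_nonzero:
  assumes "s \<le> n - r1" and "s \<le> r2" and "s \<le> n - r2"
  shows "hahn_coeff n r1 r2 s s \<noteq> 0"
proof -
  have "s \<le> n - s + 1" using assms by linarith
  hence "ffall (real (n - s + 1)) s > 0" "ffall (real (n - r1)) s > 0" "ffall (real r2) s > 0"
    using assms by (intro ffall_of_nat_pos; simp)+
  thus ?thesis by (simp add: hahn_coeff_def)
qed

lemma cnj_poly_hahn_poly: "cnj (poly (hahn_poly n r1 r2 s) (of_nat k)) = poly (hahn_poly n r1 r2 s) (of_nat k)"
  by (simp add: hahn_poly_def poly_sum poly_falling_poly)

lemma poly_pairing_hahn_poly_reflected_falling:
  fixes x1 :: "'a::finite set"
  defines "n \<equiv> card (UNIV :: 'a set)"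
  assumes "card x1 = r1"
  shows "poly_pairing {x2. card x2 = r2} (\<lambda>x2. card (x2 - x1))
      (hahn_poly n r1 r2 s) (reflected_falling_poly (of_nat r2) e)
    = complex_of_real (\<Sum>j\<le>s. hahn_coeff n r1 r2 s j * falling_moment n r1 r2 j e)"
  unfolding hahn_poly_def poly_pairing_sum_smult_left
    poly_pairing_falling_reflected_falling[OF assms(2)] n_def
  by simp

lemma hahn_coeff_mult_falling_moment:
  assumes "j \<le> s" and "s \<le> n - r1"
  shows "hahn_coeff n r1 r2 s j * falling_moment n r1 r2 j e
    = (-1)^j * real (s choose j) * ffall (real r1) e
      * (ffall (real (n - s + 1)) j
         * (if j + e \<le> r2 then real ((n - (j + e)) choose (r2 - (j + e))) else 0)
         / ffall (real r2) j)"
proof -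
  have "ffall (real (n - r1)) j \<noteq> 0" using assms by (simp add: ffall_of_nat)
  thus ?thesis by (simp add: hahn_coeff_def falling_moment_def)
qed

(* In j, the left-hand side is a polynomial of degree s - 1 when e < s, and a polynomial of
   degree s divided by n - s + 1 - j when e = s (next lemma). *)

lemma ffall_binomial_ratio_low:
  assumes "j \<le> s" and "e < s" and "s \<le> r2" and "s \<le> n - r2" and "r2 \<le> n"
  shows "ffall (real (n - s + 1)) j
      * (if j + e \<le> r2 then real ((n - (j + e)) choose (r2 - (j + e))) else 0) / ffall (real r2) j
    = fact (n - s + 1) / (fact (n - r2) * fact r2)
      * (ffall (real r2 - real j) e * ffall (real n - real e - real j) (s - 1 - e))"
proof (cases "j + e \<le> r2")
  case True
  have ffall_n: "ffall (real (n - s + 1)) j = fact (n - s + 1) / fact (n - (j + e) - (s - 1 - e))"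
  proof -
    have "ffall (real (n - s + 1)) j = fact (n - s + 1) / fact (n - s + 1 - j)"
      using assms by (intro ffall_of_nat_eq_fact_div) simp
    also have "n - s + 1 - j = n - (j + e) - (s - 1 - e)" using assms by simp
    finally show ?thesis .
  qed
  have binom: "real ((n - (j + e)) choose (r2 - (j + e)))
      = fact (n - (j + e)) / (fact (r2 - (j + e)) * fact (n - r2))"
  proof -
    have "n - (j + e) - (r2 - (j + e)) = n - r2" using assms True by simp
    thus ?thesis using assms True binomial_fact[of "r2 - (j + e)" "n - (j + e)", where 'a=real] by simp
  qed
  have ffall_r2: "ffall (real r2) j = fact r2 / fact (r2 - j)"
    using assms by (intro ffall_of_nat_eq_fact_div) simp
  have ffall_r2_j: "ffall (real r2 - real j) e = fact (r2 - j) / fact (r2 - (j + e))"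
  proof -
    have "real r2 - real j = real (r2 - j)" using assms by simp
    hence "ffall (real r2 - real j) e = fact (r2 - j) / fact (r2 - j - e)"
      using True by (simp only: ffall_of_nat_eq_fact_div)
    thus ?thesis by simp
  qed
  have ffall_n_e: "ffall (real n - real e - real j) (s - 1 - e)
      = fact (n - (j + e)) / fact (n - (j + e) - (s - 1 - e))"
  proof -
    have "real n - real e - real j = real (n - (j + e))" using assms True by auto
    thus ?thesis using assms by (simp only: ffall_of_nat_eq_fact_div)
  qed
  show ?thesis using True unfolding ffall_n binom ffall_r2 ffall_r2_j ffall_n_e by (simp add: field_simps)
next
  case False
  hence "ffall (real r2 - real j) e = 0"
    using assms ffall_of_nat_eq_0[of "r2 - j" e] by (simp add: of_nat_diff)
  thus ?thesis using False by simp
qed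

lemma ffall_binomial_ratio_top:
  assumes "j \<le> s" and "s \<le> r2" and "s \<le> n - r2" and "r2 \<le> n"
  shows "ffall (real (n - s + 1)) j
      * (if j + s \<le> r2 then real ((n - (j + s)) choose (r2 - (j + s))) else 0) / ffall (real r2) j
    = fact (n - s + 1) / (fact (n - r2) * fact r2)
      * (ffall (real r2 - real j) s / (real (n - s + 1) - real j))"
proof (cases "j + s \<le> r2")
  case True
  have ffall_n: "ffall (real (n - s + 1)) j = fact (n - s + 1) / (real (Suc (n - (j + s))) * fact (n - (j + s)))"
  proof -
    have "ffall (real (n - s + 1)) j = fact (n - s + 1) / fact (n - s + 1 - j)"
      using assms by (intro ffall_of_nat_eq_fact_div) simp
    also have "n - s + 1 - j = Suc (n - (j + s))" using assms by simp
    finally show ?thesis by simp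
  qed
  have binom: "real ((n - (j + s)) choose (r2 - (j + s)))
      = fact (n - (j + s)) / (fact (r2 - (j + s)) * fact (n - r2))"
  proof -
    have "n - (j + s) - (r2 - (j + s)) = n - r2" using assms True by simp
    thus ?thesis using assms True binomial_fact[of "r2 - (j + s)" "n - (j + s)", where 'a=real] by simp
  qed
  have ffall_r2: "ffall (real r2) j = fact r2 / fact (r2 - j)"
    using assms by (intro ffall_of_nat_eq_fact_div) simp
  have ffall_r2_j: "ffall (real r2 - real j) s = fact (r2 - j) / fact (r2 - (j + s))"
  proof -
    have "real r2 - real j = real (r2 - j)" using assms by simp
    hence "ffall (real r2 - real j) s = fact (r2 - j) / fact (r2 - j - s)"
      using True by (simp only: ffall_of_nat_eq_fact_div)
    thus ?thesis by simp
  qed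
  have denom: "real (n - s + 1) - real j = real (Suc (n - (j + s)))"
    using assms by (simp add: of_nat_diff)
  show ?thesis using True unfolding ffall_n binom ffall_r2 ffall_r2_j denom by (simp add: field_simps del: of_nat_Suc)
next
  case False
  hence "ffall (real r2 - real j) s = 0"
    using assms ffall_of_nat_eq_0[of "r2 - j" s] by (simp add: of_nat_diff)
  thus ?thesis using False by simp
qed

lemma hahn_moment_sum_eq_0:
  assumes "s \<le> n - r1" and "s \<le> r2" and "s \<le> n - r2" and "r2 \<le> n" and "e < s"
  shows "(\<Sum>j\<le>s. hahn_coeff n r1 r2 s j * falling_moment n r1 r2 j e) = 0"
proof -
  define K where "K = ffall (real r1) e * (fact (n - s + 1) / (fact (n - r2) * fact r2))"
  define Q :: "real poly"
    where "Q = reflected_falling_poly (real r2) e * reflected_falling_poly (real n - real e) (s - 1 - e)"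
  have poly_Q: "poly Q x = ffall (real r2 - x) e * ffall (real n - real e - x) (s - 1 - e)" for x
    by (simp add: Q_def poly_reflected_falling_poly ffall_def algebra_simps)
  have "hahn_coeff n r1 r2 s j * falling_moment n r1 r2 j e = K * ((-1)^j * real (s choose j) * poly Q (real j))"
    if "j \<le> s" for j
    unfolding hahn_coeff_mult_falling_moment[OF that assms(1)] ffall_binomial_ratio_low[OF that assms(5,2,3,4)]
      poly_Q K_def
    by (simp add: mult_ac)
  hence "(\<Sum>j\<le>s. hahn_coeff n r1 r2 s j * falling_moment n r1 r2 j e)
      = K * (\<Sum>j\<le>s. (-1)^j * real (s choose j) * poly Q (real j))"
    by (simp add: sum_distrib_left)
  also have "(\<Sum>j\<le>s. (-1)^j * real (s choose j) * poly Q (real j)) = 0"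
  proof (rule alternating_sum_choose_poly_eq_0)
    have "degree Q \<le> e + (s - 1 - e)"
      unfolding Q_def by (rule order.trans[OF degree_mult_le]) (simp add: degree_reflected_falling_poly)
    thus "degree Q < s" using assms(5) by simp
  qed
  finally show ?thesis by simp
qed

lemma hahn_moment_sum_top:
  assumes "s \<le> n - r1" and "s \<le> r2" and "s \<le> n - r2" and "r2 \<le> n"
  shows "(\<Sum>j\<le>s. hahn_coeff n r1 r2 s j * falling_moment n r1 r2 j s)
    = ffall (real r1) s * (fact (n - s + 1) / (fact (n - r2) * fact r2))
      * (ffall (real (n - r2)) s * fact s / (\<Prod>i\<le>s. real (n - s + 1) - real i))"
proof -
  define K where "K = ffall (real r1) s * (fact (n - s + 1) / (fact (n - r2) * fact r2))"
  define F :: "real poly" where "F = reflected_falling_poly (real r2) s"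
  define A where "A = real (n - s + 1)"
  have poly_F: "poly F x = ffall (real r2 - x) s" for x
    by (simp add: F_def poly_reflected_falling_poly ffall_def algebra_simps)
  have "hahn_coeff n r1 r2 s j * falling_moment n r1 r2 j s
      = K * ((-1)^j * real (s choose j) * poly F (real j) / (A - real j))" if "j \<le> s" for j
    unfolding hahn_coeff_mult_falling_moment[OF that assms(1)] ffall_binomial_ratio_top[OF that assms(2-4)]
      poly_F K_def A_def
    by (simp add: mult_ac)
  hence "(\<Sum>j\<le>s. hahn_coeff n r1 r2 s j * falling_moment n r1 r2 j s)
      = K * (\<Sum>j\<le>s. (-1)^j * real (s choose j) * poly F (real j) / (A - real j))"
    by (simp add: sum_distrib_left)
  also have "\<dots> = K * ((-1)^s * fact s * poly F A / (\<Prod>i\<le>s. A - real i))"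
    using assms by (subst alternating_sum_choose_poly_div) (auto simp: F_def A_def degree_reflected_falling_poly)
  also have "(-1)^s * fact s * poly F A = fact s * ffall (real (n - r2)) s"
    using reflected_falling_poly_eq_falling_poly[of s "real r2" A] assms
    by (simp add: F_def A_def poly_falling_poly_real of_nat_diff)
  finally show ?thesis by (simp add: K_def A_def)
qed

lemma hahn_norm_eq:
  assumes "r1 \<le> n" "r2 \<le> n" "s \<le> r1" "s \<le> n - r1" "s \<le> r2" "s \<le> n - r2"
  shows "hahn_coeff n r1 r2 s s * (-1)^s * (\<Sum>j\<le>s. hahn_coeff n r1 r2 s j * falling_moment n r1 r2 j s)
    = ffall (real r1) s * ffall (real (n - r2)) s / (ffall (real (n - r1)) s * ffall (real r2) s)
      * real (n choose r2) / (real (n choose s) - (if s = 0 then 0 else real (n choose (s - 1))))"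
proof -
  define F where "F = ffall (real (n - s + 1)) s"
  define N where "N = ffall (real (n - r1)) s"
  define R where "R = ffall (real r2) s"
  define E where "E = real n - 2 * real s + 1"
  define G where "G = (fact (n - s + 1) :: real)"
  have "2 * s \<le> n" using assms by linarith
  hence "real (2 * s) \<le> real n" by (rule of_nat_mono)
  hence pos: "F > 0" "N > 0" "R > 0" "E > 0"
    using assms \<open>2 * s \<le> n\<close> unfolding F_def N_def R_def E_def
    by ((intro ffall_of_nat_pos; simp)+, simp)
  have coeff: "hahn_coeff n r1 r2 s s * (-1)^s = F / (N * R)"
    by (simp add: hahn_coeff_def F_def N_def R_def flip: power_add mult_2)
  have prod: "(\<Prod>i\<le>s. real (n - s + 1) - real i) = F * E"
    using \<open>real (2 * s) \<le> real n\<close> \<open>2 * s \<le> n\<close>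
    by (simp add: F_def E_def ffall_def lessThan_Suc_atMost[symmetric] of_nat_diff)
  have binom: "fact (n - s + 1) / (fact (n - r2) * fact r2) = real (n choose r2) * G / fact n"
    using assms by (simp add: G_def binomial_fact)
  have dim: "real (n choose s) - (if s = 0 then 0 else real (n choose (s - 1))) = fact n * E / (fact s * G)"
    using binomial_diff_binomial_pred[OF \<open>2 * s \<le> n\<close>] by (simp add: E_def G_def)
  have "G > 0" by (simp add: G_def)
  show ?thesis
    unfolding hahn_moment_sum_top[OF assms(4,5,6,2)] coeff prod binom dim
      N_def[symmetric] R_def[symmetric]
    using pos \<open>G > 0\<close> by (simp add: field_simps)
qed

lemma hahn_poly_orthogonal:
  fixes x1 :: "'a::finite set"
  defines "n \<equiv> card (UNIV :: 'a set)"
  assumes "card x1 = r1" and "r2 \<le> n" "s \<le> n - r1" "s \<le> r2" "s \<le> n - r2"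
  shows "\<forall>e<s. poly_pairing {x2. card x2 = r2} (\<lambda>x2. card (x2 - x1)) (hahn_poly n r1 r2 s)
    (reflected_falling_poly (of_nat r2) e) = 0"
  using hahn_moment_sum_eq_0[of s n r1 r2] assms(3-6)
  unfolding n_def poly_pairing_hahn_poly_reflected_falling[OF assms(2)] by simp

lemma kernel_poly_eq_hahn_poly:
  fixes f :: "'a::finite set \<Rightarrow> complex" and x1 :: "'a set" and p :: "complex poly"
  defines "n \<equiv> card (UNIV :: 'a set)"
  assumes bounds: "r2 \<le> n" "s \<le> r1" "s \<le> n - r1" "s \<le> r2" "s \<le> n - r2"
    and x1: "card x1 = r1" and f: "f \<in> L2_comp r2 s"
    and f_kernel: "\<And>x2. card x2 = r2 \<Longrightarrow> f x2 = poly p (of_nat (card (x2 - x1)))"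
    and p: "degree p = s" "poly p 0 = 1"
  shows "p = hahn_poly n r1 r2 s"
proof (rule orthogonal_poly_unique)
  show "s \<le> card ((\<lambda>x2. card (x2 - x1)) ` {x2. card x2 = r2})"
    using card_image_card_Diff_ge[OF x1] bounds unfolding n_def by blast
  show "coeff (hahn_poly n r1 r2 s) s \<noteq> 0"
    using hahn_coeff_top_nonzero[OF bounds(3-5)] by (simp add: coeff_hahn_poly_top)
  show "\<forall>e<s. poly_pairing {x2. card x2 = r2} (\<lambda>x2. card (x2 - x1)) p
      (reflected_falling_poly (of_nat r2) e) = 0"
    using L2_comp_poly_pairing_eq_0[OF f bounds(4) _ f_kernel] by blast
  show "\<forall>e<s. poly_pairing {x2. card x2 = r2} (\<lambda>x2. card (x2 - x1)) (hahn_poly n r1 r2 s)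
      (reflected_falling_poly (of_nat r2) e) = 0"
    using hahn_poly_orthogonal[OF x1] bounds unfolding n_def by blast
qed (use p in \<open>simp_all add: degree_hahn_poly poly_hahn_poly_0\<close>)

lemma hahn_poly_row_norm:
  fixes x1 :: "'a::finite set"
  defines "n \<equiv> card (UNIV :: 'a set)"
  assumes bounds: "r1 \<le> n" "r2 \<le> n" "s \<le> r1" "s \<le> n - r1" "s \<le> r2" "s \<le> n - r2"
    and x1: "card x1 = r1"
  shows "(\<Sum>x2 | card x2 = r2. poly (hahn_poly n r1 r2 s) (of_nat (card (x2 - x1)))
      * cnj (poly (hahn_poly n r1 r2 s) (of_nat (card (x2 - x1)))))
    = complex_of_real (ffall (real r1) s * ffall (real (n - r2)) s / (ffall (real (n - r1)) s * ffall (real r2) s)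
      * real (n choose r2) / (real (n choose s) - (if s = 0 then 0 else real (n choose (s - 1)))))"
proof -
  define H where "H = hahn_poly n r1 r2 s"
  define X2 where "X2 = {x2 :: 'a set. card x2 = r2}"
  have orth: "\<forall>e<s. poly_pairing X2 (\<lambda>x2. card (x2 - x1)) H (reflected_falling_poly (of_nat r2) e) = 0"
    using hahn_poly_orthogonal[OF x1] bounds unfolding H_def X2_def n_def by blast
  have "(\<Sum>x2\<in>X2. poly H (of_nat (card (x2 - x1))) * cnj (poly H (of_nat (card (x2 - x1)))))
      = poly_pairing X2 (\<lambda>x2. card (x2 - x1)) H H"
    by (simp add: poly_pairing_def H_def cnj_poly_hahn_poly)
  also have "\<dots> = coeff H s * (-1)^s
      * poly_pairing X2 (\<lambda>x2. card (x2 - x1)) H (reflected_falling_poly (of_nat r2) s)"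
    using orth degree_hahn_poly unfolding H_def by (rule poly_pairing_self_eq_lead_pairing)
  also have "\<dots> = complex_of_real (hahn_coeff n r1 r2 s s * (-1)^s
      * (\<Sum>j\<le>s. hahn_coeff n r1 r2 s j * falling_moment n r1 r2 j s))"
    unfolding H_def X2_def n_def coeff_hahn_poly_top poly_pairing_hahn_poly_reflected_falling[OF x1]
    by simp
  finally show ?thesis unfolding H_def X2_def hahn_norm_eq[OF bounds] .
qed

section \<open>The trace\<close>

lemma sum_mult_delta:
  fixes f :: "'a::finite set \<Rightarrow> complex"
  shows "(\<Sum>z\<in>UNIV. f z * delta y z) = f y"
proof -
  have "(\<Sum>z\<in>UNIV. f z * delta y z) = (\<Sum>z\<in>UNIV. if z = y then f z else 0)"
    by (rule sum.cong) (auto simp: delta_def)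
  thus ?thesis by simp
qed

lemma op_trace_comp_hadjoint:
  fixes T :: "('a::finite set \<Rightarrow> complex) \<Rightarrow> ('a set \<Rightarrow> complex)"
  assumes "\<And>\<psi> x. T \<psi> x = (\<Sum>y\<in>UNIV. K x y * \<psi> y)"
  shows "op_trace (T \<circ> hadjoint T) = (\<Sum>x\<in>UNIV. \<Sum>y\<in>UNIV. K x y * cnj (K x y))"
proof -
  have "hadjoint T (delta x) = (\<lambda>y. cnj (K x y))" for x
    unfolding hadjoint_def assms sum_mult_delta ..
  thus ?thesis by (simp add: op_trace_def assms)
qed

lemma supported_kernel_eq:
  fixes L :: "('a::finite set \<Rightarrow> complex) \<Rightarrow> ('a set \<Rightarrow> complex)"
  assumes "\<And>\<psi> x2. L \<psi> x2 = (if card x2 = r2 then (\<Sum>x1\<in>{x1. card x1 = r1}. g x2 x1 * \<psi> x1) else 0)"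
  shows "L \<psi> x2 = (\<Sum>x1\<in>UNIV. (if card x2 = r2 \<and> card x1 = r1 then g x2 x1 else 0) * \<psi> x1)"
  by (simp add: assms if_distrib[of "\<lambda>c. c * _"] sum.If_cases Collect_conj_eq Int_commute)

lemma supported_kernel_delta:
  fixes L :: "('a::finite set \<Rightarrow> complex) \<Rightarrow> ('a set \<Rightarrow> complex)"
  assumes "\<And>\<psi> x2. L \<psi> x2 = (if card x2 = r2 then (\<Sum>x1\<in>{x1. card x1 = r1}. g x2 x1 * \<psi> x1) else 0)"
    and "card x2 = r2" and "card x1 = r1"
  shows "L (delta x1) x2 = g x2 x1"
  using assms(2,3) unfolding supported_kernel_eq[OF assms(1)] sum_mult_delta by simp

lemma op_trace_comp_hadjoint_supported:
  fixes L :: "('a::finite set \<Rightarrow> complex) \<Rightarrow> ('a set \<Rightarrow> complex)"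
  assumes "\<And>\<psi> x2. L \<psi> x2 = (if card x2 = r2 then (\<Sum>x1\<in>{x1. card x1 = r1}. g x2 x1 * \<psi> x1) else 0)"
  shows "op_trace (L \<circ> hadjoint L) = (\<Sum>x1 | card x1 = r1. \<Sum>x2 | card x2 = r2. g x2 x1 * cnj (g x2 x1))"
proof -
  define K where "K x2 x1 = (if card x2 = r2 \<and> card x1 = r1 then g x2 x1 else 0)" for x2 x1 :: "'a set"
  have "K x2 x1 * cnj (K x2 x1) = (if card x2 = r2 \<and> card x1 = r1 then g x2 x1 * cnj (g x2 x1) else 0)"
    for x2 x1 by (simp add: K_def)
  hence "(\<Sum>x1\<in>UNIV. K x2 x1 * cnj (K x2 x1))
      = (if card x2 = r2 then (\<Sum>x1 | card x1 = r1. g x2 x1 * cnj (g x2 x1)) else 0)" for x2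
    by (cases "card x2 = r2") (simp_all add: sum_UNIV_if_eq)
  hence "op_trace (L \<circ> hadjoint L) = (\<Sum>x2 | card x2 = r2. \<Sum>x1 | card x1 = r1. g x2 x1 * cnj (g x2 x1))"
    using op_trace_comp_hadjoint[of L K, OF supported_kernel_eq[OF assms, folded K_def]]
    by (simp add: sum_UNIV_if_eq)
  thus ?thesis by (simp add: sum.swap[of _ "{x2. card x2 = r2}"])
qed

theorem corollary1:
  fixes L :: "('a::finite set \<Rightarrow> complex) \<Rightarrow> ('a set \<Rightarrow> complex)"
    and r1 r2 s :: nat
  defines "n \<equiv> card (UNIV :: 'a set)"
  assumes "r1 \<le> n" and "r2 \<le> n"
    and "s \<le> min (min r1 (n - r1)) (min r2 (n - r2))"
    and "is_Lambda r1 r2 s L"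
  shows "op_trace (L \<circ> hadjoint L) =
    complex_of_real
      ((ffall (real r1) s * ffall (real (n - r2)) s) / (ffall (real (n - r1)) s * ffall (real r2) s)
       * (real (n choose r1) * real (n choose r2))
         / (real (n choose s) - (if s = 0 then 0 else real (n choose (s - 1)))))"
proof -
  have bounds: "r1 \<le> n" "r2 \<le> n" "s \<le> r1" "s \<le> n - r1" "s \<le> r2" "s \<le> n - r2"
    using assms(2-4) by auto
  obtain p :: "complex poly" where comp: "\<And>\<psi>. L \<psi> \<in> L2_comp r2 s"
    and p: "degree p = s" "poly p 0 = 1"
    and kernel: "\<And>\<psi> x2. L \<psi> x2 = (if card x2 = r2
      then (\<Sum>x1\<in>{x1. card x1 = r1}. poly p (of_nat (card (x2 - x1))) * \<psi> x1) else 0)"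
    using assms(5) unfolding is_Lambda_def by blast
  obtain x1 :: "'a set" where x1: "card x1 = r1"
    using obtain_subset_with_card_n[of r1 "UNIV :: 'a set"] bounds(1) unfolding n_def by blast
  have p_hahn: "p = hahn_poly n r1 r2 s"
    using kernel_poly_eq_hahn_poly[OF bounds(2-6)[unfolded n_def] x1 comp _ p]
      supported_kernel_delta[OF kernel _ x1] unfolding n_def by blast
  have "op_trace (L \<circ> hadjoint L) = (\<Sum>x1 :: 'a set | card x1 = r1. \<Sum>x2 | card x2 = r2.
      poly p (of_nat (card (x2 - x1))) * cnj (poly p (of_nat (card (x2 - x1)))))"
    by (rule op_trace_comp_hadjoint_supported) (rule kernel)
  also have "\<dots> = (\<Sum>x1 :: 'a set | card x1 = r1. complex_of_real
      (ffall (real r1) s * ffall (real (n - r2)) s / (ffall (real (n - r1)) s * ffall (real r2) s)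
       * real (n choose r2) / (real (n choose s) - (if s = 0 then 0 else real (n choose (s - 1))))))"
    using bounds unfolding p_hahn n_def by (intro sum.cong refl hahn_poly_row_norm) auto
  finally show ?thesis
    using n_subsets[of "UNIV :: 'a set" r1] unfolding n_def by (simp add: mult_ac)
qed

end
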